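(* Let $G=K_n$ with $n\ge2$, $F$ regular, $T=F^{-1}(1-1/n)$ (so $F(T)=1-1/n$), and $p=T\cdot(1-1/n)^{n-1}$. Then $T\cdot\mathbf{1}\in\mathcal{N}_{p\cdot\mathbf{1}}$ and $$\mathcal{R}(p\cdot\mathbf{1},T\cdot\mathbf{1})=n\,T\,(1-F(T))\,F(T)^{n-1}\ \ge\ \tfrac14\,\mathcal{R}^M_n.$$
   Context: Public-goods pricing game on the complete graph $K_n$: buyer $i$'s neighbours are all $j\neq i$. Values $v_i$ i.i.d. with cumulative distribution function $F$, $F(\infty)=1$. An equilibrium for $\mathbf{p}$ is $\mathbf{T}\in[0,\infty]^n$ (buyer $i$ purchases iff $v_i\ge T_i$) with $T_i=p_i/\prod_{j\neq i}F(T_j)$ for all $i$; $\mathcal{N}_{\mathbf{p}}$ is the set of equilibria; $\mathcal{R}(\mathbf{p},\mathbf{T})=\sum_ip_i(1-F(T_i))$; $p\cdot\mathbf{1}$ is the uniform price vector. $F$ is regular: atomless, supported on an interval in $[0,\infty)$ with positive density $f$ there, and $\phi(x)=x-\frac{1-F(x)}{f(x)}$ non-decreasing. $F^{-1}(q)=\min\{x:F(x)=q\}$. $\mathcal{R}^M_n=\mathbb{E}[\max_i\phi(v_i)^+]$ for $v_1,\dots,v_n$ i.i.d. $F$ (the optimal single-item auction revenue with $n$ such bidders). *)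

theory Defs
  imports "HOL-Analysis.Analysis"
begin

definition Fext :: "(real \<Rightarrow> real) \<Rightarrow> ereal \<Rightarrow> real" where
  "Fext F x = (case x of ereal r \<Rightarrow> F r | PInfty \<Rightarrow> 1 | MInfty \<Rightarrow> 0)"

definition vv :: "(real \<Rightarrow> real) \<Rightarrow> (real \<Rightarrow> real) \<Rightarrow> real \<Rightarrow> real" where
  "vv F f x = x - (1 - F x) / f x"

definition regular :: "(real \<Rightarrow> real) \<Rightarrow> (real \<Rightarrow> real) \<Rightarrow> bool" where
  "regular F f \<longleftrightarrow> (\<exists>I. is_interval I \<and> I \<noteq> {} \<and> I \<subseteq> {0..} \<and>
      (\<forall>x\<in>I. f x > 0) \<and>
      (\<forall>x. ((\<lambda>t. if t \<in> I then f t else 0) has_integral F x) {..x}) \<and>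
      (F \<longlongrightarrow> 1) at_top \<and>
      mono_on I (vv F f))"

definition Finv :: "(real \<Rightarrow> real) \<Rightarrow> real \<Rightarrow> real" where
  "Finv F q = (LEAST x. F x = q)"

text \<open>Equilibria of the pricing game on K_n (buyers 0..n-1). Thresholds live in [0,oo];
  a division by a zero product is read as oo.\<close>
definition equilibrium :: "(real \<Rightarrow> real) \<Rightarrow> nat \<Rightarrow> (nat \<Rightarrow> real) \<Rightarrow> (nat \<Rightarrow> ereal) \<Rightarrow> bool" where
  "equilibrium F n p T \<longleftrightarrow> (\<forall>i<n. 0 \<le> T i \<and>
     T i = (let P = (\<Prod>j\<in>{..<n} - {i}. Fext F (T j)) in
            if P = 0 then \<infinity> else ereal (p i / P)))"

definition revenue :: "(real \<Rightarrow> real) \<Rightarrow> nat \<Rightarrow> (nat \<Rightarrow> real) \<Rightarrow> (nat \<Rightarrow> ereal) \<Rightarrow> real" where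
  "revenue F n p T = (\<Sum>i<n. p i * (1 - Fext F (T i)))"

text \<open>Optimal single-item auction revenue E[max_i phi(v_i)^+], v_i iid with CDF F.\<close>
definition myerson_rev :: "(real \<Rightarrow> real) \<Rightarrow> (real \<Rightarrow> real) \<Rightarrow> nat \<Rightarrow> ennreal" where
  "myerson_rev F f n = (\<integral>\<^sup>+ v. ennreal (Max ((\<lambda>i. max 0 (vv F f (v i))) ` {..<n}))
       \<partial>(PiM {..<n} (\<lambda>_. interval_measure F)))"

end

theory Submission
  imports Defs "HOL-Probability.Probability"
begin

text \<open>Let \<open>q = 1 - 1/n\<close> and \<open>T = F\<^sup>-\<^sup>1(q)\<close>; then \<open>T\<close> lies in the support, so \<open>k = \<phi>(T)\<close> is
  meaningful. Monotonicity of \<open>\<phi>\<close> gives \<open>max\<^sub>i \<phi>(v\<^sub>i)\<^sup>+ \<le> k\<^sup>+ + \<Sum>\<^sub>i (\<phi>(v\<^sub>i) - k)\<cdot>[v\<^sub>i > T]\<close>,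
  and the integration by parts identity \<open>\<integral>\<^sub>T\<^sup>\<infinity> \<phi>(x) f(x) dx = T (1 - F T)\<close> bounds the expectation
  of each summand by \<open>(T - k)(1 - q) = (T - k)/n\<close>. Hence \<open>R\<^sup>M\<^sub>n \<le> k\<^sup>+ + T - k\<close>, which is \<open>T\<close> if
  \<open>k \<ge> 0\<close>; if \<open>k < 0\<close>, the same identity on \<open>[0, T]\<close>, where \<open>\<phi> \<le> k\<close>, gives \<open>-k q \<le> T (1 - q)\<close>.
  Either way \<open>R\<^sup>M\<^sub>n \<le> T/q\<close>, while the uniform price earns \<open>T q\<^sup>n\<^sup>-\<^sup>1 \<ge> T/(4q)\<close> because
  \<open>(1 - 1/n)\<^sup>n \<ge> 1/4\<close>.\<close>

lemma one_minus_inverse_power_mono: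
  assumes "2 \<le> n"
  shows "(1 - 1 / real n) ^ n \<le> (1 - 1 / real (Suc n)) ^ Suc n"
proof -
  define r where "r = real n"
  define a where "a = 1 - 1 / r"
  define b where "b = 1 - 1 / (r + 1)"
  define x where "x = 1 / (r\<^sup>2 - 1)"
  have "2 \<le> r"
    using assms by (simp add: r_def)
  then have "1 < r\<^sup>2"
    using power_strict_mono[of 1 r 2] by simp
  then have "0 \<le> a" "0 \<le> x" "b = a * (1 + x)"
    using \<open>2 \<le> r\<close> by (simp_all add: a_def b_def x_def field_simps power2_eq_square)
  have "r \<le> r * (r * r)"
    using \<open>1 < r\<^sup>2\<close> \<open>2 \<le> r\<close> mult_left_mono[of 1 "r * r" r] by (simp add: power2_eq_square)
  then have "0 < r * r + r * (r * r) - (1 + r)"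
    using \<open>1 < r\<^sup>2\<close> by (simp add: power2_eq_square)
  then have "1 \<le> b * (1 + r * x)"
    using \<open>1 < r\<^sup>2\<close> \<open>2 \<le> r\<close> by (simp add: b_def x_def field_simps power2_eq_square le_divide_eq)
  then have "a ^ n \<le> a ^ n * (b * (1 + r * x))"
    using mult_left_mono[of 1 _ "a ^ n"] \<open>0 \<le> a\<close> by simp
  also have "\<dots> \<le> a ^ n * (b * (1 + x) ^ n)"
    using Bernoulli_inequality[of x n] \<open>0 \<le> a\<close> \<open>0 \<le> x\<close> \<open>2 \<le> r\<close>
    by (intro mult_left_mono) (auto simp: b_def r_def)
  also have "\<dots> = b ^ Suc n"
    by (simp add: \<open>b = a * (1 + x)\<close> power_mult_distrib)
  finally show ?thesis
    by (simp add: a_def b_def r_def add.commute)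
qed

lemma quarter_le_one_minus_inverse_power:
  "2 \<le> n \<Longrightarrow> 1/4 \<le> (1 - 1 / real n) ^ n"
proof (induction n rule: nat_induct_at_least)
  case base
  then show ?case by (simp add: power2_eq_square)
next
  case (Suc n)
  then show ?case
    using one_minus_inverse_power_mono[of n] by linarith
qed

lemma (in prob_space) nn_integral_PiM_sum_components:
  assumes [measurable]: "h \<in> borel_measurable M"
  shows "(\<integral>\<^sup>+v. (\<Sum>i<n. h (v i)) \<partial>PiM {..<n} (\<lambda>_. M)) = of_nat n * (\<integral>\<^sup>+x. h x \<partial>M)"
proof -
  have "(\<integral>\<^sup>+v. h (v i) \<partial>PiM {..<n} (\<lambda>_. M)) = (\<integral>\<^sup>+x. h x \<partial>M)" if "i < n" for i
  proof -
    have "(\<integral>\<^sup>+x. h x \<partial>M) = (\<integral>\<^sup>+x. h x \<partial>distr (PiM {..<n} (\<lambda>_. M)) M (\<lambda>v. v i))"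
      using distr_PiM_component[of "{..<n}" "\<lambda>_. M" i] prob_space_axioms that by simp
    also have "\<dots> = (\<integral>\<^sup>+v. h (v i) \<partial>PiM {..<n} (\<lambda>_. M))"
      by (rule nn_integral_distr) (use that in auto)
    finally show ?thesis by simp
  qed
  then show ?thesis by (simp add: nn_integral_sum)
qed

lemma equilibrium_uniform:
  assumes "0 \<le> T" "F T \<noteq> 0"
  shows "equilibrium F n (\<lambda>_. T * F T ^ (n - 1)) (\<lambda>_. ereal T)"
  using assms by (simp add: equilibrium_def Fext_def)

lemma revenue_uniform: "revenue F n (\<lambda>_. p) (\<lambda>_. ereal T) = n * p * (1 - F T)"
  by (simp add: revenue_def Fext_def)

lemma quarter_mult_le_ennreal:
  assumes "x \<le> 4 * y"
  shows "1/4 * x \<le> (y :: ennreal)"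
proof -
  have "1/4 * x \<le> 1/4 * (4 * y)"
    using assms by (rule mult_left_mono) simp
  also have "\<dots> = y"
    by (simp add: mult.assoc[symmetric] ennreal_divide_times)
  finally show ?thesis .
qed

locale cdf_density =
  fixes F g :: "real \<Rightarrow> real"
  assumes density_nonneg: "\<And>x. 0 \<le> g x"
    and has_integral_density: "\<And>x. (g has_integral F x) {..x}"
    and cdf_tendsto_1: "(F \<longlongrightarrow> 1) at_top"
begin

lemma density_lebesgue_measurable: "g \<in> borel_measurable lebesgue"
proof (rule borel_measurable_LIMSEQ_real)
  show "(\<lambda>x. g x * indicator {..real m} x) \<in> borel_measurable lebesgue" for m
    by (rule has_integral_implies_lebesgue_measurable_real[OF has_integral_density])
  fix x :: real
  obtain N :: nat where "x \<le> real N" using real_arch_simple by blast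
  then have "\<forall>m\<ge>N. g x * indicator {..real m} x = g x"
    by (auto simp: indicator_def)
  then show "(\<lambda>m. g x * indicator {..real m} x) \<longlonglongrightarrow> g x"
    by (intro tendsto_eventually) (auto simp: eventually_sequentially)
qed

lemma ex_borel_density:
  "\<exists>h. h \<in> borel_measurable borel \<and> (\<forall>x. 0 \<le> h x) \<and> (AE x in lborel. g x = h x)"
proof -
  obtain h where h: "h \<in> borel_measurable lborel" "AE x in lborel. g x = h x"
    using completion_ex_borel_measurable_real[OF density_lebesgue_measurable] by blast
  show ?thesis
  proof (intro exI conjI allI)
    show "(\<lambda>x. max 0 (h x)) \<in> borel_measurable borel" using h(1) by simp
    show "AE x in lborel. g x = max 0 (h x)"
      using h(2) by eventually_elim (use density_nonneg in \<open>metis max.absorb2\<close>)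
  qed simp
qed

text \<open>The density \<open>g\<close> is only Lebesgue measurable; the law of \<open>F\<close> is built from a Borel
  representative of it.\<close>
definition borel_density :: "real \<Rightarrow> real" where
  "borel_density = (SOME h. h \<in> borel_measurable borel \<and> (\<forall>x. 0 \<le> h x) \<and> (AE x in lborel. g x = h x))"

lemma
  shows borel_measurable_borel_density[measurable]: "borel_density \<in> borel_measurable borel"
    and borel_density_nonneg: "0 \<le> borel_density x"
    and AE_density_eq_borel_density: "AE x in lborel. g x = borel_density x"
  using someI_ex[OF ex_borel_density] unfolding borel_density_def[symmetric] by auto

definition law :: "real measure" where
  "law = density lborel (\<lambda>t. ennreal (borel_density t))"

lemma sets_law[simp, measurable_cong]: "sets law = sets borel"
  and space_law[simp]: "space law = UNIV"
  by (simp_all add: law_def)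

lemma emeasure_law: "A \<in> sets borel \<Longrightarrow> emeasure law A = (\<integral>\<^sup>+t. ennreal (borel_density t) * indicator A t \<partial>lborel)"
  unfolding law_def by (subst emeasure_density) auto

lemma nn_integral_density_atMost: "(\<integral>\<^sup>+t. ennreal (g t) * indicator {..x} t \<partial>lborel) = ennreal (F x)"
  by (rule nn_integral_has_integral_lebesgue'[OF _ has_integral_density]) (simp add: density_nonneg)

lemma cdf_nonneg: "0 \<le> F x"
  using has_integral_nonneg[OF has_integral_density] density_nonneg by blast

lemma emeasure_law_atMost: "emeasure law {..x} = F x"
proof -
  have "(\<integral>\<^sup>+t. ennreal (borel_density t) * indicator {..x} t \<partial>lborel) =
      (\<integral>\<^sup>+t. ennreal (g t) * indicator {..x} t \<partial>lborel)"
    using AE_density_eq_borel_density by (intro nn_integral_cong_AE) auto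
  then show ?thesis
    by (simp add: emeasure_law nn_integral_density_atMost)
qed

lemma cdf_mono: "x \<le> y \<Longrightarrow> F x \<le> F y"
  using emeasure_mono[of "{..x}" "{..y}" law] by (simp add: emeasure_law_atMost cdf_nonneg)

lemma emeasure_law_UNIV: "emeasure law UNIV = 1"
proof -
  have "(SUP m. emeasure law {..real m}) = emeasure law (\<Union>m. {..real m})"
    by (rule SUP_emeasure_incseq) (auto simp: incseq_def)
  also have "(\<Union>m. {..real m}) = UNIV"
    by (auto intro: real_arch_simple)
  finally have "(SUP m. ennreal (F (real m))) = emeasure law UNIV"
    by (simp add: emeasure_law_atMost)
  moreover have "(\<lambda>m. ennreal (F (real m))) \<longlonglongrightarrow> (SUP m. ennreal (F (real m)))"
    by (rule LIMSEQ_SUP) (auto simp: incseq_def intro!: ennreal_leI cdf_mono)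
  then have "(SUP m. ennreal (F (real m))) = ennreal 1"
    by (rule LIMSEQ_unique) (intro tendsto_ennrealI filterlim_compose[OF cdf_tendsto_1 filterlim_real_sequentially])
  ultimately show ?thesis
    by simp
qed

lemma real_distribution_law: "real_distribution law"
  unfolding real_distribution_def real_distribution_axioms_def
  by (auto intro!: prob_spaceI simp: emeasure_law_UNIV)

sublocale law: real_distribution law
  by (rule real_distribution_law)

lemma cdf_law: "cdf law = F"
  by (auto simp: fun_eq_iff cdf_def measure_def emeasure_law_atMost cdf_nonneg)

lemma isCont_cdf: "isCont F x"
proof -
  have "AE t in lborel. ennreal (borel_density t) * indicator {x} t = 0"
    using AE_lborel_singleton[of x] by eventually_elim auto
  then have "emeasure law {x} = 0"
    by (simp add: emeasure_law nn_integral_cong_AE)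
  then show ?thesis
    using law.isCont_cdf[of x] by (simp add: cdf_law measure_def)
qed

lemma borel_measurable_cdf[measurable]: "F \<in> borel_measurable borel"
  by (rule borel_measurable_continuous_onI) (simp add: continuous_at_imp_continuous_on isCont_cdf)

lemma cdf_le_1: "F x \<le> 1"
  using law.cdf_bounded_prob[of x] by (simp add: cdf_law)

lemma emeasure_law_Ioc: "a \<le> b \<Longrightarrow> emeasure law {a<..b} = F b - F a"
  using law.emeasure_Ioc[of a b] by (simp add: cdf_law)

lemma interval_measure_cdf: "interval_measure F = law"
proof (rule cdf_unique[OF _ real_distribution_law])
  have "real_distribution (interval_measure F) \<and> cdf (interval_measure F) = F"
    using law.cdf_lim_at_bot cdf_tendsto_1
    by (auto intro!: real_distribution_interval_measure cdf_interval_measure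
        simp: cdf_law cdf_mono continuous_at_imp_continuous_within isCont_cdf)
  then show "real_distribution (interval_measure F)" "cdf (interval_measure F) = cdf law"
    by (simp_all add: cdf_law)
qed

lemma cdf_eq_0_if_density_vanishes_below:
  assumes "\<And>t. t < x \<Longrightarrow> g t = 0"
  shows "F x = 0"
proof -
  have "AE t in lborel. ennreal (g t) * indicator {..x} t = 0"
    using AE_lborel_singleton[of x] by eventually_elim (auto simp: assms indicator_def)
  then have "ennreal (F x) = 0"
    using nn_integral_density_atMost[of x] nn_integral_cong_AE by fastforce
  then show ?thesis
    using cdf_nonneg[of x] by simp
qed

lemma cdf_eq_1_if_density_vanishes_above:
  assumes "\<And>t. x < t \<Longrightarrow> g t = 0"
  shows "F x = 1"
proof -
  have "AE t in lborel. ennreal (borel_density t) * indicator {x<..} t = 0"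
    using AE_density_eq_borel_density by eventually_elim (auto simp: assms indicator_def)
  then have "emeasure law {x<..} = 0"
    using emeasure_law[of "{x<..}"] nn_integral_cong_AE by fastforce
  moreover have "emeasure law UNIV = emeasure law {..x} + emeasure law {x<..}"
    by (subst plus_emeasure) (auto intro!: arg_cong[where f="emeasure law"])
  ultimately have "ennreal (F x) = 1"
    by (simp add: emeasure_law_UNIV emeasure_law_atMost)
  then show ?thesis
    using cdf_nonneg[of x] by simp
qed

text \<open>For the virtual value \<open>\<phi>\<close> this is \<open>g x * (\<phi> x - k)\<close>, almost everywhere.\<close>
definition virtual_surplus :: "real \<Rightarrow> real \<Rightarrow> real" where
  "virtual_surplus k x = (x - k) * borel_density x - (1 - F x)"

lemma nn_integral_density_Ioc:
  "a \<le> b \<Longrightarrow> (\<integral>\<^sup>+x. ennreal (borel_density x) * indicator {a<..b} x \<partial>lborel) = F b - F a"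
  using emeasure_law[of "{a<..b}"] emeasure_law_Ioc[of a b] by simp

text \<open>Fubini on the triangle \<open>a \<le> s < x \<le> b\<close>.\<close>
lemma nn_integral_Ioc_by_parts:
  assumes "a \<le> b"
  shows "(\<integral>\<^sup>+x. ennreal (borel_density x) * ennreal (x - a) * indicator {a<..b} x \<partial>lborel)
       = (\<integral>\<^sup>+s. ennreal (F b - F s) * indicator {a..b} s \<partial>lborel)"
proof -
  define H where "H s x = ennreal (borel_density x) * indicator {a<..b} x * indicator {a..<x} s" for s x
  have "case_prod H = (\<lambda>p. ennreal (borel_density (snd p)) * indicator {a<..b} (snd p) *
      indicator {p. a \<le> fst p \<and> fst p < snd p} p)"
    by (auto simp: H_def fun_eq_iff indicator_def)
  then have H_measurable: "case_prod H \<in> borel_measurable (lborel \<Otimes>\<^sub>M lborel)"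
    by simp
  have "(\<integral>\<^sup>+x. ennreal (borel_density x) * ennreal (x - a) * indicator {a<..b} x \<partial>lborel)
      = (\<integral>\<^sup>+x. (\<integral>\<^sup>+s. H s x \<partial>lborel) \<partial>lborel)"
  proof (intro nn_integral_cong)
    fix x :: real
    have "(\<integral>\<^sup>+s. H s x \<partial>lborel) = ennreal (borel_density x) * indicator {a<..b} x * emeasure lborel {a..<x}"
      unfolding H_def by (rule nn_integral_cmult_indicator) simp
    then show "ennreal (borel_density x) * ennreal (x - a) * indicator {a<..b} x = (\<integral>\<^sup>+s. H s x \<partial>lborel)"
      by (cases "a < x") (auto simp: indicator_def)
  qed
  also have "\<dots> = (\<integral>\<^sup>+s. (\<integral>\<^sup>+x. H s x \<partial>lborel) \<partial>lborel)"
    by (rule lborel_pair.Fubini'[OF H_measurable])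
  also have "\<dots> = (\<integral>\<^sup>+s. ennreal (F b - F s) * indicator {a..b} s \<partial>lborel)"
  proof (intro nn_integral_cong)
    fix s :: real
    have "(\<integral>\<^sup>+x. H s x \<partial>lborel)
        = (\<integral>\<^sup>+x. indicator {a..b} s * (ennreal (borel_density x) * indicator {s<..b} x) \<partial>lborel)"
      by (intro nn_integral_cong) (auto simp: H_def indicator_def)
    also have "\<dots> = indicator {a..b} s * emeasure law {s<..b}"
      by (subst nn_integral_cmult) (auto simp: emeasure_law)
    finally show "(\<integral>\<^sup>+x. H s x \<partial>lborel) = ennreal (F b - F s) * indicator {a..b} s"
      by (cases "s \<in> {a..b}") (auto simp: emeasure_law_Ioc)
  qed
  finally show ?thesis .
qed

lemma nn_integral_Ioc_linear_times_density:
  assumes "k \<le> a" "a \<le> b"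
  shows "(\<integral>\<^sup>+x. ennreal ((x - k) * borel_density x) * indicator {a<..b} x \<partial>lborel)
    = (\<integral>\<^sup>+s. ennreal (F b - F s) * indicator {a<..b} s \<partial>lborel) + ennreal ((a - k) * (F b - F a))"
proof -
  have "(\<integral>\<^sup>+x. ennreal ((x - k) * borel_density x) * indicator {a<..b} x \<partial>lborel)
      = (\<integral>\<^sup>+x. ennreal (borel_density x) * ennreal (x - a) * indicator {a<..b} x
            + ennreal (a - k) * (ennreal (borel_density x) * indicator {a<..b} x) \<partial>lborel)"
  proof (intro nn_integral_cong)
    fix x :: real
    have "(x - k) * borel_density x = borel_density x * (x - a) + (a - k) * borel_density x"
      by algebra
    then have "x \<in> {a<..b} \<Longrightarrow> ennreal ((x - k) * borel_density x)
        = ennreal (borel_density x) * ennreal (x - a) + ennreal (a - k) * ennreal (borel_density x)"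
      using assms borel_density_nonneg[of x] by (simp add: ennreal_mult)
    then show "ennreal ((x - k) * borel_density x) * indicator {a<..b} x
        = ennreal (borel_density x) * ennreal (x - a) * indicator {a<..b} x
          + ennreal (a - k) * (ennreal (borel_density x) * indicator {a<..b} x)"
      by (cases "x \<in> {a<..b}") auto
  qed
  also have "\<dots> = (\<integral>\<^sup>+x. ennreal (borel_density x) * ennreal (x - a) * indicator {a<..b} x \<partial>lborel)
      + ennreal (a - k) * (\<integral>\<^sup>+x. ennreal (borel_density x) * indicator {a<..b} x \<partial>lborel)"
    by (subst nn_integral_add) (auto simp: nn_integral_cmult)
  also have "\<dots> = (\<integral>\<^sup>+s. ennreal (F b - F s) * indicator {a<..b} s \<partial>lborel) + ennreal ((a - k) * (F b - F a))"
  proof -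
    have "AE s in lborel. ennreal (F b - F s) * indicator {a..b} s = ennreal (F b - F s) * indicator {a<..b} s"
      using AE_lborel_singleton[of a] by eventually_elim (auto simp: indicator_def)
    then show ?thesis
      using assms cdf_mono[of a b]
      by (simp add: nn_integral_Ioc_by_parts nn_integral_density_Ioc nn_integral_cong_AE ennreal_mult)
  qed
  finally show ?thesis .
qed

lemma nn_integral_Ioc_survival:
  assumes "a \<le> b"
  shows "(\<integral>\<^sup>+x. ennreal (1 - F x) * indicator {a<..b} x \<partial>lborel)
    = (\<integral>\<^sup>+s. ennreal (F b - F s) * indicator {a<..b} s \<partial>lborel) + ennreal ((1 - F b) * (b - a))"
proof -
  have "(\<integral>\<^sup>+x. ennreal (1 - F x) * indicator {a<..b} x \<partial>lborel)
     = (\<integral>\<^sup>+x. ennreal (F b - F x) * indicator {a<..b} x + ennreal (1 - F b) * indicator {a<..b} x \<partial>lborel)"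
  proof (intro nn_integral_cong)
    fix x :: real
    have "x \<in> {a<..b} \<Longrightarrow> ennreal (1 - F x) = ennreal (F b - F x) + ennreal (1 - F b)"
      using cdf_mono[of x b] cdf_le_1[of b] by (subst ennreal_plus[symmetric]) auto
    then show "ennreal (1 - F x) * indicator {a<..b} x
        = ennreal (F b - F x) * indicator {a<..b} x + ennreal (1 - F b) * indicator {a<..b} x"
      by (cases "x \<in> {a<..b}") auto
  qed
  also have "\<dots> = (\<integral>\<^sup>+s. ennreal (F b - F s) * indicator {a<..b} s \<partial>lborel)
      + ennreal (1 - F b) * emeasure lborel {a<..b}"
    by (subst nn_integral_add) (auto simp: nn_integral_cmult_indicator)
  also have "ennreal (1 - F b) * emeasure lborel {a<..b} = ennreal ((1 - F b) * (b - a))"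
    using assms cdf_le_1[of b] by (simp add: ennreal_mult)
  finally show ?thesis .
qed

lemma nn_integral_Ioc_cdf_gap_finite:
  "(\<integral>\<^sup>+s. ennreal (F b - F s) * indicator {a<..b} s \<partial>lborel) \<noteq> \<infinity>"
proof -
  have "ennreal (F b - F s) * indicator {a<..b} s \<le> indicator {a<..b} s" for s
    using cdf_le_1[of b] cdf_nonneg[of s] by (auto simp: indicator_def)
  then have "(\<integral>\<^sup>+s. ennreal (F b - F s) * indicator {a<..b} s \<partial>lborel) \<le> (\<integral>\<^sup>+s. indicator {a<..b} s \<partial>lborel)"
    by (rule nn_integral_mono)
  also have "\<dots> < \<infinity>"
    by (cases "a \<le> b") auto
  finally show ?thesis
    by (simp add: less_top)
qed

lemma cdf_increment_le_if_virtual_value_le: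
  assumes "k \<le> a" "a \<le> b"
    and le: "\<And>x. a < x \<Longrightarrow> x \<le> b \<Longrightarrow> (x - k) * g x \<le> 1 - F x"
  shows "(a - k) * (F b - F a) \<le> (1 - F b) * (b - a)"
proof -
  let ?C = "\<integral>\<^sup>+s. ennreal (F b - F s) * indicator {a<..b} s \<partial>lborel"
  have "(\<integral>\<^sup>+x. ennreal ((x - k) * borel_density x) * indicator {a<..b} x \<partial>lborel)
      \<le> (\<integral>\<^sup>+x. ennreal (1 - F x) * indicator {a<..b} x \<partial>lborel)"
    using AE_density_eq_borel_density
  proof (intro nn_integral_mono_AE, eventually_elim)
    case (elim x)
    then show ?case
      using le[of x] by (auto simp: indicator_def intro!: ennreal_leI)
  qed
  then have "?C + ennreal ((a - k) * (F b - F a)) \<le> ?C + ennreal ((1 - F b) * (b - a))"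
    using assms by (simp add: nn_integral_Ioc_linear_times_density nn_integral_Ioc_survival)
  then show ?thesis
    using nn_integral_Ioc_cdf_gap_finite assms cdf_le_1[of b]
    by (simp add: ennreal_add_left_cancel_le)
qed

lemma nn_integral_Ioc_virtual_surplus_le:
  assumes "k \<le> a" "a \<le> b"
    and ge: "\<And>x. a < x \<Longrightarrow> x \<le> b \<Longrightarrow> 1 - F x \<le> (x - k) * g x"
  shows "(\<integral>\<^sup>+x. ennreal (virtual_surplus k x) * indicator {a<..b} x \<partial>lborel) \<le> (a - k) * (1 - F a)"
proof -
  let ?X = "\<integral>\<^sup>+x. ennreal (virtual_surplus k x) * indicator {a<..b} x \<partial>lborel"
  let ?C = "\<integral>\<^sup>+s. ennreal (F b - F s) * indicator {a<..b} s \<partial>lborel"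
  have "?X + (\<integral>\<^sup>+x. ennreal (1 - F x) * indicator {a<..b} x \<partial>lborel)
      = (\<integral>\<^sup>+x. ennreal (virtual_surplus k x) * indicator {a<..b} x + ennreal (1 - F x) * indicator {a<..b} x \<partial>lborel)"
    by (subst nn_integral_add) (auto simp: virtual_surplus_def)
  also have "\<dots> = (\<integral>\<^sup>+x. ennreal ((x - k) * borel_density x) * indicator {a<..b} x \<partial>lborel)"
    using AE_density_eq_borel_density
  proof (intro nn_integral_cong_AE, eventually_elim)
    case (elim x)
    have "x \<in> {a<..b} \<Longrightarrow> ennreal ((x - k) * borel_density x) = ennreal (virtual_surplus k x) + ennreal (1 - F x)"
      using ge[of x] elim cdf_le_1[of x] by (subst ennreal_plus[symmetric]) (auto simp: virtual_surplus_def)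
    then show ?case
      by (cases "x \<in> {a<..b}") auto
  qed
  finally have sum_eq: "?X + (?C + ennreal ((1 - F b) * (b - a))) = ?C + ennreal ((a - k) * (F b - F a))"
    using assms by (simp add: nn_integral_Ioc_linear_times_density nn_integral_Ioc_survival)
  have "?C + ?X \<le> ?C + ?X + ennreal ((1 - F b) * (b - a))"
    by simp
  also have "\<dots> = ?C + ennreal ((a - k) * (F b - F a))"
    using sum_eq by (simp add: ac_simps)
  finally have "?X \<le> ennreal ((a - k) * (F b - F a))"
    using nn_integral_Ioc_cdf_gap_finite by (simp add: ennreal_add_left_cancel_le)
  also have "\<dots> \<le> ennreal ((a - k) * (1 - F a))"
    using assms cdf_le_1[of b] by (intro ennreal_leI mult_left_mono) auto
  finally show ?thesis .
qed

lemma nn_integral_Ioi_virtual_surplus_le: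
  assumes "k \<le> a"
    and ge: "\<And>x. a < x \<Longrightarrow> 1 - F x \<le> (x - k) * g x"
  shows "(\<integral>\<^sup>+x. ennreal (virtual_surplus k x) * indicator {a<..} x \<partial>lborel) \<le> (a - k) * (1 - F a)"
proof -
  define u where "u m x = ennreal (virtual_surplus k x) * indicator {a<..a + real m} x" for m x
  have "incseq u"
    by (auto simp: u_def incseq_def le_fun_def indicator_def)
  have pointwise_SUP: "ennreal (virtual_surplus k x) * indicator {a<..} x = (SUP m. u m x)" for x
  proof (rule antisym)
    obtain m :: nat where "x - a \<le> real m"
      using real_arch_simple by blast
    then show "ennreal (virtual_surplus k x) * indicator {a<..} x \<le> (SUP m. u m x)"
      by (intro SUP_upper2[of m]) (auto simp: u_def indicator_def)
  qed (auto simp: u_def indicator_def intro!: SUP_least)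
  have "(\<integral>\<^sup>+x. ennreal (virtual_surplus k x) * indicator {a<..} x \<partial>lborel) = (\<integral>\<^sup>+x. (SUP m. u m x) \<partial>lborel)"
    by (simp add: pointwise_SUP)
  also have "\<dots> = (SUP m. integral\<^sup>N lborel (u m))"
    by (rule nn_integral_monotone_convergence_SUP[OF \<open>incseq u\<close>])
      (simp add: u_def[abs_def] virtual_surplus_def)
  also have "\<dots> \<le> (a - k) * (1 - F a)"
    unfolding u_def using assms by (intro SUP_least nn_integral_Ioc_virtual_surplus_le) auto
  finally show ?thesis .
qed

end

locale regular_cdf =
  fixes F f :: "real \<Rightarrow> real" and I :: "real set"
  assumes is_interval_support: "is_interval I"
    and support_nonneg: "I \<subseteq> {0..}"
    and density_pos: "\<And>x. x \<in> I \<Longrightarrow> 0 < f x"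
    and has_integral_cdf: "\<And>x. ((\<lambda>t. if t \<in> I then f t else 0) has_integral F x) {..x}"
    and cdf_tendsto_1: "(F \<longlongrightarrow> 1) at_top"
    and mono_on_virtual_value: "mono_on I (vv F f)"

sublocale regular_cdf \<subseteq> cdf_density F "\<lambda>t. if t \<in> I then f t else 0"
  using density_pos has_integral_cdf cdf_tendsto_1 by unfold_locales (auto intro: less_imp_le)

lemma regular_imp_regular_cdf: "regular F f \<Longrightarrow> \<exists>I. regular_cdf F f I"
  unfolding regular_def regular_cdf_def by blast

context regular_cdf
begin

lemma cdf_nonpos: "x \<le> 0 \<Longrightarrow> F x = 0"
  by (rule cdf_eq_0_if_density_vanishes_below) (use support_nonneg in force)

lemma in_support_between:
  assumes "s \<in> I" "t \<in> I" "s \<le> x" "x \<le> t"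
  shows "x \<in> I"
  using is_interval_support assms unfolding is_interval_1 by blast

lemma in_support_if_cdf_strictly_between:
  assumes "0 < F x" "F x < 1"
  shows "x \<in> I"
proof (rule ccontr)
  assume "x \<notin> I"
  show False
  proof (cases "\<exists>s\<in>I. s < x")
    case True
    then obtain s where "s \<in> I" "s < x"
      by blast
    have "(if t \<in> I then f t else 0) = 0" if "x < t" for t
      using in_support_between[of s t x] \<open>s \<in> I\<close> \<open>s < x\<close> \<open>x \<notin> I\<close> that by auto
    then have "F x = 1"
      by (rule cdf_eq_1_if_density_vanishes_above)
    with assms show False by simp
  next
    case False
    then have "F x = 0"
      by (intro cdf_eq_0_if_density_vanishes_below) auto
    with assms show False by simp
  qed
qed

lemma cdf_eq_1_beyond_support:
  assumes "T \<in> I" "T < x" "x \<notin> I"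
  shows "F x = 1"
proof (rule cdf_eq_1_if_density_vanishes_above)
  show "(if t \<in> I then f t else 0) = 0" if "x < t" for t
    using in_support_between[of T t x] assms that by auto
qed

lemma
  assumes "0 < q" "q < 1"
  shows cdf_Finv: "F (Finv F q) = q"
    and Finv_pos: "0 < Finv F q"
    and Finv_in_support: "Finv F q \<in> I"
proof -
  define S where "S = {x. F x = q}"
  have S_pos: "0 < x" if "x \<in> S" for x
    using that cdf_nonpos[of x] assms by (force simp: S_def)
  have "closed S"
    unfolding S_def
    by (intro closed_Collect_eq continuous_on_const continuous_at_imp_continuous_on ballI isCont_cdf)
  obtain b where b: "\<And>x. x \<ge> b \<Longrightarrow> F x > q"
    using order_tendstoD(1)[OF cdf_tendsto_1 \<open>q < 1\<close>] by (auto simp: eventually_at_top_linorder)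
  have "F 0 \<le> q" "q \<le> F (max b 0)"
    using cdf_nonpos[of 0] assms b[of "max b 0"] by auto
  then obtain x where "F x = q"
    using IVT[of F 0 q "max b 0"] isCont_cdf by force
  then have "S \<noteq> {}"
    by (auto simp: S_def)
  then have "Inf S \<in> S"
    using \<open>closed S\<close> S_pos by (intro closed_contains_Inf) (auto simp: bdd_below_def intro: less_imp_le)
  moreover have "Finv F q = Inf S"
    unfolding Finv_def
  proof (rule Least_equality)
    show "F (Inf S) = q" using \<open>Inf S \<in> S\<close> by (simp add: S_def)
    show "F y = q \<Longrightarrow> Inf S \<le> y" for y
      using S_pos by (intro cInf_lower) (auto simp: S_def bdd_below_def intro: less_imp_le)
  qed
  ultimately show "F (Finv F q) = q" "0 < Finv F q"
    using S_pos by (auto simp: S_def)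
  then show "Finv F q \<in> I"
    using assms by (intro in_support_if_cdf_strictly_between) auto
qed

lemma virtual_value_mono:
  "s \<in> I \<Longrightarrow> t \<in> I \<Longrightarrow> s \<le> t \<Longrightarrow> vv F f s \<le> vv F f t"
  by (rule mono_onD[OF mono_on_virtual_value])

lemma survival_le_above:
  assumes "T \<in> I" "T < x"
  shows "1 - F x \<le> (x - vv F f T) * (if x \<in> I then f x else 0)"
proof (cases "x \<in> I")
  case True
  have "vv F f T \<le> x - (1 - F x) / f x"
    using virtual_value_mono[OF assms(1) True] assms by (simp add: vv_def)
  then show ?thesis
    using density_pos[OF True] True by (simp add: field_simps)
next
  case False
  then show ?thesis
    using cdf_eq_1_beyond_support[OF assms False] by simp
qed

lemma survival_ge_below:
  assumes "T \<in> I" "x \<le> T"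
  shows "(x - vv F f T) * (if x \<in> I then f x else 0) \<le> 1 - F x"
proof (cases "x \<in> I")
  case True
  have "x - (1 - F x) / f x \<le> vv F f T"
    using virtual_value_mono[OF True assms(1)] assms by (simp add: vv_def)
  then show ?thesis
    using density_pos[OF True] True by (simp add: field_simps)
next
  case False
  then show ?thesis
    using cdf_le_1[of x] by simp
qed

lemma neg_virtual_value_bound:
  assumes "T \<in> I" "vv F f T \<le> 0"
  shows "- vv F f T * F T \<le> T * (1 - F T)"
proof -
  have "0 \<le> T"
    using assms(1) support_nonneg by auto
  then have "(0 - vv F f T) * (F T - F 0) \<le> (1 - F T) * (T - 0)"
    using assms survival_ge_below[OF assms(1)]
    by (intro cdf_increment_le_if_virtual_value_le) auto
  then show ?thesis
    using cdf_nonpos[of 0] by (simp add: mult.commute)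
qed

lemma AE_law_in_support: "AE x in law. x \<in> I"
proof -
  have "AE x in lborel. 0 < ennreal (borel_density x) \<longrightarrow> x \<in> I"
    using AE_density_eq_borel_density by eventually_elim (auto split: if_splits)
  then show ?thesis
    unfolding law_def by (subst AE_density) auto
qed

lemma virtual_value_le: "x \<in> I \<Longrightarrow> vv F f x \<le> x"
  using density_pos[of x] cdf_le_1[of x] by (simp add: vv_def)

definition excess_virtual_value :: "real \<Rightarrow> real \<Rightarrow> real" where
  "excess_virtual_value T x = (if x \<in> I \<and> T < x then vv F f x - vv F f T else 0)"

lemma excess_virtual_value_nonneg: "T \<in> I \<Longrightarrow> 0 \<le> excess_virtual_value T x"
  using virtual_value_mono[of T x] by (auto simp: excess_virtual_value_def)

lemma borel_measurable_excess_virtual_value[measurable]: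
  "excess_virtual_value T \<in> borel_measurable borel"
proof -
  have "I \<inter> {T<..} \<in> sets borel"
    using real_interval_borel_measurable[OF is_interval_support] by auto
  moreover have "(\<lambda>x. vv F f x - vv F f T) \<in> borel_measurable (restrict_space borel (I \<inter> {T<..}))"
    using mono_on_virtual_value
    by (intro borel_measurable_mono_on_fnc) (auto simp: mono_on_def)
  ultimately show ?thesis
    unfolding excess_virtual_value_def[abs_def]
    by (subst (asm) measurable_restrict_space_iff) auto
qed

lemma nn_integral_excess_virtual_value_le:
  assumes "T \<in> I"
  shows "(\<integral>\<^sup>+x. excess_virtual_value T x \<partial>law) \<le> (T - vv F f T) * (1 - F T)"
proof -
  let ?k = "vv F f T"
  have "(\<integral>\<^sup>+x. excess_virtual_value T x \<partial>law)
      = (\<integral>\<^sup>+x. ennreal (borel_density x) * ennreal (excess_virtual_value T x) \<partial>lborel)"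
    unfolding law_def by (rule nn_integral_density) auto
  also have "\<dots> = (\<integral>\<^sup>+x. ennreal (virtual_surplus ?k x) * indicator {T<..} x \<partial>lborel)"
    using AE_density_eq_borel_density
  proof (intro nn_integral_cong_AE, eventually_elim)
    case (elim x)
    have "borel_density x * excess_virtual_value T x = virtual_surplus ?k x" if "T < x"
    proof (cases "x \<in> I")
      case True
      then show ?thesis
        using elim that density_pos[OF True]
        by (simp add: excess_virtual_value_def virtual_surplus_def vv_def field_simps)
    next
      case False
      then show ?thesis
        using elim cdf_eq_1_beyond_support[OF assms that False]
        by (simp add: excess_virtual_value_def virtual_surplus_def)
    qed
    then show ?case
      using excess_virtual_value_nonneg[OF assms, of x] borel_density_nonneg[of x]
      by (cases "T < x") (auto simp: ennreal_mult[symmetric] excess_virtual_value_def)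
  qed
  also have "\<dots> \<le> (T - ?k) * (1 - F T)"
    using assms virtual_value_le survival_le_above
    by (intro nn_integral_Ioi_virtual_surplus_le) auto
  finally show ?thesis .
qed

lemma Max_virtual_value_le:
  fixes n :: nat
  assumes "T \<in> I" "1 \<le> n" "\<And>i. i < n \<Longrightarrow> v i \<in> I"
  shows "Max ((\<lambda>i. max 0 (vv F f (v i))) ` {..<n})
    \<le> max 0 (vv F f T) + (\<Sum>j<n. excess_virtual_value T (v j))"
proof -
  have "max 0 (vv F f (v i)) \<le> max 0 (vv F f T) + (\<Sum>j<n. excess_virtual_value T (v j))" if "i < n" for i
  proof -
    have "max 0 (vv F f (v i)) \<le> max 0 (vv F f T) + excess_virtual_value T (v i)"
      using assms(1) assms(3)[OF that] virtual_value_mono[of T "v i"] virtual_value_mono[of "v i" T]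
      by (cases "T < v i") (auto simp: excess_virtual_value_def)
    also have "excess_virtual_value T (v i) \<le> (\<Sum>j<n. excess_virtual_value T (v j))"
      using that excess_virtual_value_nonneg[OF assms(1)] by (intro member_le_sum) auto
    finally show ?thesis by simp
  qed
  then show ?thesis
    using assms(2) by (subst Max_le_iff) (auto simp: lessThan_empty_iff)
qed

lemma myerson_rev_le:
  assumes "T \<in> I" "1 \<le> n"
  shows "myerson_rev F f n \<le> max 0 (vv F f T) + n * ((T - vv F f T) * (1 - F T))"
proof -
  let ?M = "PiM {..<n} (\<lambda>_. law)" and ?c = "max 0 (vv F f T)"
  have "AE v in ?M. \<forall>i\<in>{..<n}. v i \<in> I"
    by (intro eventually_ball_finite ballI AE_PiM_component law.prob_space_axioms AE_law_in_support) auto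
  then have "AE v in ?M. ennreal (Max ((\<lambda>i. max 0 (vv F f (v i))) ` {..<n}))
      \<le> ennreal ?c + (\<Sum>i<n. ennreal (excess_virtual_value T (v i)))"
  proof eventually_elim
    case (elim v)
    then have "ennreal (Max ((\<lambda>i. max 0 (vv F f (v i))) ` {..<n}))
        \<le> ennreal (?c + (\<Sum>i<n. excess_virtual_value T (v i)))"
      by (intro ennreal_leI Max_virtual_value_le[OF assms]) auto
    also have "\<dots> = ennreal ?c + (\<Sum>i<n. ennreal (excess_virtual_value T (v i)))"
      using excess_virtual_value_nonneg[OF assms(1)] by (simp add: sum_nonneg)
    finally show ?case .
  qed
  then have "myerson_rev F f n \<le> (\<integral>\<^sup>+v. ennreal ?c + (\<Sum>i<n. ennreal (excess_virtual_value T (v i))) \<partial>?M)"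
    unfolding myerson_rev_def interval_measure_cdf by (rule nn_integral_mono_AE)
  also have "\<dots> = (\<integral>\<^sup>+v. ennreal ?c \<partial>?M) + (\<integral>\<^sup>+v. (\<Sum>i<n. ennreal (excess_virtual_value T (v i))) \<partial>?M)"
    by (rule nn_integral_add) auto
  also have "\<dots> = ennreal ?c + of_nat n * (\<integral>\<^sup>+x. excess_virtual_value T x \<partial>law)"
  proof -
    interpret PiM: prob_space ?M
      by (rule prob_space_PiM) (rule law.prob_space_axioms)
    have "(\<lambda>x. ennreal (excess_virtual_value T x)) \<in> borel_measurable law"
      by measurable
    from law.nn_integral_PiM_sum_components[OF this, of n] show ?thesis
      using PiM.emeasure_space_1 by simp
  qed
  also have "\<dots> \<le> ennreal ?c + of_nat n * ennreal ((T - vv F f T) * (1 - F T))"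
    using nn_integral_excess_virtual_value_le[OF assms(1)] by (intro add_left_mono mult_left_mono) auto
  also have "\<dots> = ennreal (?c + n * ((T - vv F f T) * (1 - F T)))"
    using assms virtual_value_le[of T] cdf_le_1[of T]
    by (subst ennreal_plus) (auto simp: ennreal_of_nat_eq_real_of_nat ennreal_mult)
  finally show ?thesis .
qed

lemma myerson_rev_le_quantile:
  assumes "2 \<le> n"
  defines "q \<equiv> 1 - 1 / real n"
  shows "myerson_rev F f n \<le> Finv F q / q"
proof -
  define T where "T = Finv F q"
  have q: "0 < q" "q < 1" "real n * (1 - q) = 1"
    using assms by (auto simp: q_def field_simps)
  then have "T \<in> I" "F T = q" "0 < T"
    by (simp_all add: T_def cdf_Finv Finv_pos Finv_in_support)
  have "max 0 (vv F f T) + n * ((T - vv F f T) * (1 - F T)) = max 0 (vv F f T) + (n * (1 - q)) * (T - vv F f T)"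
    using \<open>F T = q\<close> by (simp add: ac_simps)
  also have "\<dots> = max 0 (vv F f T) + (T - vv F f T)"
    using q by simp
  also have "\<dots> \<le> T / q"
  proof (cases "0 \<le> vv F f T")
    case True
    then show ?thesis
      using q \<open>0 < T\<close> by (simp add: le_divide_eq)
  next
    case False
    then have "- vv F f T * q \<le> T * (1 - q)"
      using neg_virtual_value_bound[OF \<open>T \<in> I\<close>] \<open>F T = q\<close> by simp
    then show ?thesis
      using False q by (simp add: field_simps)
  qed
  finally have "max 0 (vv F f T) + n * ((T - vv F f T) * (1 - F T)) \<le> T / q" .
  moreover have "1 \<le> n"
    using assms by simp
  ultimately show ?thesis
    unfolding T_def[symmetric] using myerson_rev_le[OF \<open>T \<in> I\<close>] by (meson ennreal_leI order_trans)
qed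

end

theorem lemma3p3:
  fixes F f :: "real \<Rightarrow> real" and n :: nat
  assumes "n \<ge> 2" and "regular F f"
  defines "T \<equiv> Finv F (1 - 1 / real n)"
  defines "p \<equiv> T * (1 - 1 / real n) ^ (n - 1)"
  shows "F T = 1 - 1 / real n
     \<and> equilibrium F n (\<lambda>_. p) (\<lambda>_. ereal T)
     \<and> revenue F n (\<lambda>_. p) (\<lambda>_. ereal T) = real n * T * (1 - F T) * F T ^ (n - 1)
     \<and> ennreal (revenue F n (\<lambda>_. p) (\<lambda>_. ereal T)) \<ge> (1/4) * myerson_rev F f n"
proof -
  obtain I where "regular_cdf F f I"
    using regular_imp_regular_cdf[OF assms(2)] by blast
  then interpret regular_cdf F f I .
  define q where "q = 1 - 1 / real n"
  have q: "0 < q" "q < 1" "real n * (1 - q) = 1"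
    using assms(1) by (auto simp: q_def)
  then have "F T = q" "0 < T"
    by (simp_all add: T_def q_def[symmetric] cdf_Finv Finv_pos)
  have revenue: "revenue F n (\<lambda>_. p) (\<lambda>_. ereal T) = T * q ^ (n - 1)"
    using q by (simp add: revenue_uniform p_def \<open>F T = q\<close> q_def[symmetric])
  have "myerson_rev F f n \<le> T / q"
    using myerson_rev_le_quantile[OF assms(1)] by (simp add: T_def q_def)
  also have "\<dots> \<le> ennreal (4 * (T * q ^ (n - 1)))"
    using quarter_le_one_minus_inverse_power[OF assms(1)] q \<open>0 < T\<close> assms(1)
    by (intro ennreal_leI) (simp add: q_def[symmetric] field_simps power_eq_if)
  also have "\<dots> = 4 * ennreal (T * q ^ (n - 1))"
    using q \<open>0 < T\<close> by (simp add: ennreal_mult)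
  finally have "myerson_rev F f n \<le> 4 * ennreal (T * q ^ (n - 1))" .
  then show ?thesis
    using equilibrium_uniform[of T F n] revenue \<open>F T = q\<close> \<open>0 < T\<close> q
    by (auto simp: p_def q_def[symmetric] quarter_mult_le_ennreal)
qed

end
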